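(* No minimally non-perfectly divisible graph contains a simplicial vertex.
   Context: All graphs are finite and simple. A vertex is simplicial if its neighbourhood is a clique. For $S\subseteq V(G)$, $G[S]$ is the subgraph induced by $S$. $\omega(G)$ is the number of vertices in a largest clique of $G$ and $\chi(G)$ the chromatic number. A graph $G$ is perfect if $\chi(H)=\omega(H)$ for every induced subgraph $H$ of $G$. A partition $(A,B)$ of $V(G)$ is good if $G[A]$ is perfect and $\omega(G[B])<\omega(G)$. A graph $G$ is perfectly divisible if every induced subgraph $H$ of $G$ with at least one edge admits a good partition (of $V(H)$). A graph is minimally non-perfectly divisible if it is not perfectly divisible but each of its proper induced subgraphs is perfectly divisible. *)

theory Defs
  imports Main
begin

text \<open>The induced subgraph G[S] (S \<subseteq> V) is
represented by the vertex set S with the same relation E.\<close>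

definition graph :: "'a set \<Rightarrow> ('a \<Rightarrow> 'a \<Rightarrow> bool) \<Rightarrow> bool" where
  "graph V E \<longleftrightarrow> finite V \<and> (\<forall>x y. E x y \<longrightarrow> E y x) \<and> (\<forall>x. \<not> E x x)"

definition clique :: "('a \<Rightarrow> 'a \<Rightarrow> bool) \<Rightarrow> 'a set \<Rightarrow> bool" where
  "clique E K \<longleftrightarrow> (\<forall>x\<in>K. \<forall>y\<in>K. x \<noteq> y \<longrightarrow> E x y)"

definition omega :: "('a \<Rightarrow> 'a \<Rightarrow> bool) \<Rightarrow> 'a set \<Rightarrow> nat" where
  "omega E S = Max {card K | K. K \<subseteq> S \<and> clique E K}"

definition proper_colouring :: "('a \<Rightarrow> 'a \<Rightarrow> bool) \<Rightarrow> 'a set \<Rightarrow> nat \<Rightarrow> ('a \<Rightarrow> nat) \<Rightarrow> bool" where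
  "proper_colouring E S k f \<longleftrightarrow> f ` S \<subseteq> {..<k} \<and> (\<forall>x\<in>S. \<forall>y\<in>S. E x y \<longrightarrow> f x \<noteq> f y)"

definition chi :: "('a \<Rightarrow> 'a \<Rightarrow> bool) \<Rightarrow> 'a set \<Rightarrow> nat" where
  "chi E S = (LEAST k. \<exists>f. proper_colouring E S k f)"

definition perfect :: "('a \<Rightarrow> 'a \<Rightarrow> bool) \<Rightarrow> 'a set \<Rightarrow> bool" where
  "perfect E S \<longleftrightarrow> (\<forall>T\<subseteq>S. chi E T = omega E T)"

definition good_partition :: "('a \<Rightarrow> 'a \<Rightarrow> bool) \<Rightarrow> 'a set \<Rightarrow> 'a set \<Rightarrow> 'a set \<Rightarrow> bool" where
  "good_partition E S A B \<longleftrightarrow> A \<union> B = S \<and> A \<inter> B = {} \<and> perfect E A \<and> omega E B < omega E S"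

definition has_edge :: "('a \<Rightarrow> 'a \<Rightarrow> bool) \<Rightarrow> 'a set \<Rightarrow> bool" where
  "has_edge E S \<longleftrightarrow> (\<exists>x\<in>S. \<exists>y\<in>S. E x y)"

definition perfectly_divisible :: "('a \<Rightarrow> 'a \<Rightarrow> bool) \<Rightarrow> 'a set \<Rightarrow> bool" where
  "perfectly_divisible E S \<longleftrightarrow> (\<forall>T\<subseteq>S. has_edge E T \<longrightarrow> (\<exists>A B. good_partition E T A B))"

definition minimally_non_pd :: "('a \<Rightarrow> 'a \<Rightarrow> bool) \<Rightarrow> 'a set \<Rightarrow> bool" where
  "minimally_non_pd E S \<longleftrightarrow> \<not> perfectly_divisible E S \<and> (\<forall>T. T \<subset> S \<longrightarrow> perfectly_divisible E T)"

definition simplicial :: "('a \<Rightarrow> 'a \<Rightarrow> bool) \<Rightarrow> 'a set \<Rightarrow> 'a \<Rightarrow> bool" where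
  "simplicial E S v \<longleftrightarrow> v \<in> S \<and> clique E {u \<in> S. E v u}"

end

theory Submission
  imports Defs
begin

text \<open>Let v be simplicial in G. Since G - v is perfectly divisible, its vertices split into
a perfect part A and a part B with \<omega>(B) < \<omega>(G) (via a good partition of G - v if G - v has
an edge, and as A = \<emptyset>, B = V - v otherwise, since then \<omega>(G - v) \<le> 1 < 2 \<le> \<omega>(G)).
Adding v to A keeps it perfect: in any induced subgraph containing v, the neighbourhood
of v together with v is a clique, so v has fewer than \<omega> coloured neighbours and an
optimal colouring of the rest extends to v. Hence G itself has a good partition, so it is
not minimally non-perfectly divisible.\<close>

lemma clique_subset: "clique E K \<Longrightarrow> K' \<subseteq> K \<Longrightarrow> clique E K'"
  unfolding clique_def by blast

lemma finite_clique_cards: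
  "finite S \<Longrightarrow> finite {card K | K. K \<subseteq> S \<and> clique E K}"
  by (rule finite_subset[of _ "card ` Pow S"]) auto

lemma card_clique_le_omega:
  assumes "finite S" "K \<subseteq> S" "clique E K"
  shows "card K \<le> omega E S"
  unfolding omega_def using finite_clique_cards[OF assms(1)] assms
  by (intro Max_ge) auto

lemma obtain_maximum_clique:
  assumes "finite S"
  obtains K where "K \<subseteq> S" "clique E K" "card K = omega E S"
proof -
  have "card {} \<in> {card K | K. K \<subseteq> S \<and> clique E K}"
    by (rule CollectI, rule exI[of _ "{}"]) (simp add: clique_def)
  then have "{card K | K. K \<subseteq> S \<and> clique E K} \<noteq> {}" by blast
  then show ?thesis
    using Max_in[OF finite_clique_cards[OF assms, of E]] that unfolding omega_def by auto
qed

lemma omega_mono: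
  assumes "finite S'" "S \<subseteq> S'"
  shows "omega E S \<le> omega E S'"
proof -
  obtain K where "K \<subseteq> S" "clique E K" "card K = omega E S"
    using obtain_maximum_clique[OF finite_subset[OF assms(2,1)]] .
  then show ?thesis using card_clique_le_omega[OF assms(1), of K E] assms(2) by simp
qed

lemma omega_le_1_if_no_edge:
  assumes "finite S" "\<not> has_edge E S"
  shows "omega E S \<le> 1"
proof -
  obtain K where K: "K \<subseteq> S" "clique E K" "card K = omega E S"
    using obtain_maximum_clique[OF assms(1)] .
  then have "\<forall>a\<in>K. \<forall>b\<in>K. a = b"
    using assms(2) unfolding clique_def has_edge_def by blast
  then show ?thesis using K card_le_Suc0_iff_eq finite_subset[OF K(1) assms(1)] by fastforce
qed

lemma omega_ge_2_if_edge:
  assumes "graph S E" "has_edge E S"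
  shows "2 \<le> omega E S"
proof -
  obtain x y where xy: "x \<in> S" "y \<in> S" "E x y"
    using assms(2) unfolding has_edge_def by blast
  then have "x \<noteq> y" "clique E {x, y}"
    using assms(1) unfolding graph_def clique_def by blast+
  then show ?thesis
    using card_clique_le_omega[of S "{x, y}" E] assms(1) xy unfolding graph_def by simp
qed

lemma card_clique_le_colours:
  assumes "proper_colouring E S k f" "clique E K" "K \<subseteq> S" "finite K"
  shows "card K \<le> k"
proof -
  have "inj_on f K"
    using assms unfolding inj_on_def proper_colouring_def clique_def by blast
  moreover have "f ` K \<subseteq> {..<k}"
    using assms unfolding proper_colouring_def by blast
  ultimately show ?thesis
    by (metis card_image card_lessThan card_mono finite_lessThan)
qed

lemma omega_le_colours:
  assumes "proper_colouring E S k f" "finite S"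
  shows "omega E S \<le> k"
proof -
  obtain K where "K \<subseteq> S" "clique E K" "card K = omega E S"
    using obtain_maximum_clique[OF assms(2)] .
  then show ?thesis using card_clique_le_colours[OF assms(1)] finite_subset assms(2) by metis
qed

lemma chi_le_colours: "proper_colouring E S k f \<Longrightarrow> chi E S \<le> k"
  unfolding chi_def by (blast intro: Least_le)

lemma ex_chi_colouring:
  assumes "finite S" "\<And>x. \<not> E x x"
  shows "\<exists>f. proper_colouring E S (chi E S) f"
proof -
  obtain h where "bij_betw h S {0..<card S}"
    using ex_bij_betw_finite_nat[OF assms(1)] by blast
  then have "proper_colouring E S (card S) h"
    using assms(2) unfolding proper_colouring_def bij_betw_def inj_on_def by fastforce
  then have "\<exists>k f. proper_colouring E S k f" by blast
  then show ?thesis unfolding chi_def by (rule LeastI_ex)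
qed

lemma omega_le_chi:
  assumes "finite S" "\<And>x. \<not> E x x"
  shows "omega E S \<le> chi E S"
proof -
  obtain f where "proper_colouring E S (chi E S) f"
    using ex_chi_colouring[of S E] assms by blast
  then show ?thesis using omega_le_colours assms(1) by blast
qed

lemma perfect_empty: "perfect E {}"
proof -
  have "chi E {} = 0"
    by (rule le_0_eq[THEN iffD1], rule chi_le_colours) (simp add: proper_colouring_def)
  moreover have "omega E {} \<le> chi E {}"
    using omega_le_colours[of E "{}" 0] by (simp add: proper_colouring_def)
  ultimately show ?thesis unfolding perfect_def by auto
qed

lemma proper_colouring_insert:
  assumes f: "proper_colouring E S k f" and "finite S" "v \<notin> S"
    and few_neighbours: "card {u \<in> S. E v u} < k"
    and sym: "\<And>x y. E x y \<Longrightarrow> E y x" and "\<not> E v v"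
  shows "\<exists>g. proper_colouring E (insert v S) k g"
proof -
  let ?N = "{u \<in> S. E v u}"
  have "finite ?N" using \<open>finite S\<close> by simp
  then have "card (f ` ?N) < card {..<k}"
    using few_neighbours card_image_le[of ?N f] by simp
  then have "\<not> {..<k} \<subseteq> f ` ?N"
    using card_mono[OF finite_imageI[OF \<open>finite ?N\<close>, of f], of "{..<k}"] by linarith
  then obtain c where c: "c < k" "c \<notin> f ` ?N" by blast
  have "proper_colouring E (insert v S) k (f(v := c))"
    unfolding proper_colouring_def
  proof (intro conjI ballI impI)
    show "(f(v := c)) ` insert v S \<subseteq> {..<k}"
      using f c(1) \<open>v \<notin> S\<close> unfolding proper_colouring_def by auto
  next
    fix x y assume "x \<in> insert v S" "y \<in> insert v S" "E x y"
    then show "(f(v := c)) x \<noteq> (f(v := c)) y"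
      using f c(2) \<open>v \<notin> S\<close> \<open>\<not> E v v\<close> sym[of x y]
      unfolding proper_colouring_def by (cases "x = v"; cases "y = v") auto
  qed
  then show ?thesis by blast
qed

lemma perfect_insert_simplicial:
  assumes G: "graph V E" "insert v A \<subseteq> V"
    and A: "perfect E A" and nbhd: "clique E {u \<in> A. E v u}"
  shows "perfect E (insert v A)"
  unfolding perfect_def
proof (intro allI impI)
  fix T assume T: "T \<subseteq> insert v A"
  have "finite T"
    using G T finite_subset unfolding graph_def by (meson order_trans)
  have sym: "\<And>x y. E x y \<Longrightarrow> E y x" and irrefl: "\<And>x. \<not> E x x"
    using G(1) unfolding graph_def by blast+
  show "chi E T = omega E T"
  proof (cases "v \<in> T")
    case False
    then show ?thesis using T A unfolding perfect_def by blast
  next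
    case True
    define T0 where "T0 = T - {v}"
    have T0: "T0 \<subseteq> A" "finite T0" "v \<notin> T0" "T = insert v T0"
      using T True \<open>finite T\<close> unfolding T0_def by auto
    have "chi E T0 = omega E T0"
      using A T0(1) unfolding perfect_def by blast
    then obtain f where "proper_colouring E T0 (omega E T0) f"
      using ex_chi_colouring[of T0 E] T0(2) irrefl by auto
    moreover have "omega E T0 \<le> omega E T"
      using omega_mono[OF \<open>finite T\<close>, of T0 E] T0(4) by blast
    ultimately have f: "proper_colouring E T0 (omega E T) f"
      unfolding proper_colouring_def by auto
    have "clique E (insert v {u \<in> T0. E v u})"
      using nbhd sym T0(1) unfolding clique_def by blast
    moreover have "insert v {u \<in> T0. E v u} \<subseteq> T"
      using T0(4) by blast
    ultimately have "card (insert v {u \<in> T0. E v u}) \<le> omega E T"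
      using card_clique_le_omega[OF \<open>finite T\<close>] by blast
    then have "card {u \<in> T0. E v u} < omega E T"
      using T0(2,3) by simp
    then obtain g where "proper_colouring E T (omega E T) g"
      using proper_colouring_insert[OF f T0(2,3) _ sym irrefl] T0(4) by blast
    then have "chi E T \<le> omega E T" by (rule chi_le_colours)
    then show ?thesis
      using omega_le_chi[of T E, OF \<open>finite T\<close> irrefl] by simp
  qed
qed

lemma ex_good_partition_if_simplicial:
  assumes G: "graph V E" "has_edge E V"
    and v: "simplicial E V v"
    and pd: "perfectly_divisible E (V - {v})"
  shows "\<exists>A B. good_partition E V A B"
proof -
  have "finite V" using G(1) unfolding graph_def by blast
  have "\<exists>A B. A \<union> B = V - {v} \<and> A \<inter> B = {} \<and> perfect E A \<and> omega E B < omega E V"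
  proof (cases "has_edge E (V - {v})")
    case True
    then obtain A B where "good_partition E (V - {v}) A B"
      using pd unfolding perfectly_divisible_def by blast
    moreover have "omega E (V - {v}) \<le> omega E V"
      using omega_mono[OF \<open>finite V\<close>, of "V - {v}" E] by blast
    ultimately show ?thesis
      unfolding good_partition_def by (meson order_less_le_trans)
  next
    case False
    then have "omega E (V - {v}) \<le> 1"
      using omega_le_1_if_no_edge[of "V - {v}" E] \<open>finite V\<close> by blast
    then have "omega E (V - {v}) < omega E V"
      using omega_ge_2_if_edge[OF G] by linarith
    then show ?thesis using perfect_empty[of E] by blast
  qed
  then obtain A B where AB: "A \<union> B = V - {v}" "A \<inter> B = {}" "perfect E A" "omega E B < omega E V"
    by blast
  have "v \<in> V" and "clique E {u \<in> V. E v u}"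
    using v unfolding simplicial_def by blast+
  have "insert v A \<subseteq> V"
    using \<open>v \<in> V\<close> AB(1) by blast
  moreover have "clique E {u \<in> A. E v u}"
    using \<open>clique E {u \<in> V. E v u}\<close> AB(1) by (elim clique_subset) blast
  ultimately have "perfect E (insert v A)"
    by (rule perfect_insert_simplicial[OF G(1) _ AB(3)])
  moreover have "insert v A \<union> B = V" "insert v A \<inter> B = {}"
    using \<open>v \<in> V\<close> AB(1,2) by auto
  ultimately have "good_partition E V (insert v A) B"
    using AB(4) unfolding good_partition_def by simp
  then show ?thesis by blast
qed

lemma minimally_non_pd_has_no_good_partition:
  assumes "minimally_non_pd E V"
  shows "has_edge E V" "\<not> (\<exists>A B. good_partition E V A B)"
proof -
  obtain T where T: "T \<subseteq> V" "has_edge E T" "\<not> (\<exists>A B. good_partition E T A B)"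
    using assms unfolding minimally_non_pd_def perfectly_divisible_def by blast
  have "\<not> perfectly_divisible E T"
    using T(2,3) unfolding perfectly_divisible_def by blast
  then have "T = V"
    using T(1) assms unfolding minimally_non_pd_def by blast
  then show "has_edge E V" "\<not> (\<exists>A B. good_partition E V A B)"
    using T by blast+
qed

theorem lemma3:
  fixes V :: "'a set" and E :: "'a \<Rightarrow> 'a \<Rightarrow> bool"
  assumes "graph V E"
    and "minimally_non_pd E V"
  shows "\<not> (\<exists>v. simplicial E V v)"
proof
  assume "\<exists>v. simplicial E V v"
  then obtain v where v: "simplicial E V v" by blast
  then have "perfectly_divisible E (V - {v})"
    using assms(2) unfolding minimally_non_pd_def simplicial_def by blast
  then show False
    using ex_good_partition_if_simplicial[OF assms(1) _ v]
      minimally_non_pd_has_no_good_partition[OF assms(2)] by blast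
qed

end
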